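(* Let $\mathcal L_{\mathcal N}=(\mathcal L,[\cdot_\lambda\cdot]_{\mathcal L},\mathcal N)$ and $\mathcal H_{\mathcal Q}=(\mathcal H,[\cdot_\lambda\cdot]_{\mathcal H},\mathcal Q)$ be Nijenhuis Lie conformal algebras, let $0\to\mathcal H_{\mathcal Q}\xrightarrow{inc}\mathcal E_{\mathcal R}\xrightarrow{proj}\mathcal L_{\mathcal N}\to0$ be a non-abelian extension with section $s$, and let $(\chi_\lambda,\rho,\Phi)$ be the non-abelian $2$-cocycle induced by $s$. A pair $(\alpha,\beta)\in\mathrm{Aut}(\mathcal H_{\mathcal Q})\times\mathrm{Aut}(\mathcal L_{\mathcal N})$ is inducible if and only if the non-abelian $2$-cocycles $(\chi_\lambda,\rho,\Phi)$ and $(\chi^{(\alpha,\beta)}_\lambda,\rho^{(\alpha,\beta)},\Phi^{(\alpha,\beta)})$ are equivalent; in other words, if and only if the Wells map vanishes at $(\alpha,\beta)$.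
   Context: All spaces over $\mathbb C$. A Lie conformal algebra is a $\mathbb C[\partial]$-module with a $\mathbb C$-bilinear $\lambda$-bracket satisfying $[\partial a_\lambda b]=-\lambda[a_\lambda b]$, $[a_\lambda\partial b]=(\partial+\lambda)[a_\lambda b]$, $[a_\lambda b]=-[b_{-\partial-\lambda}a]$, $[a_\lambda[b_\mu c]]=[[a_\lambda b]_{\lambda+\mu}c]+[b_\mu[a_\lambda c]]$. A Nijenhuis operator is a $\mathbb C[\partial]$-linear $\mathcal N$ with $[\mathcal N(p)_\lambda\mathcal N(q)]=\mathcal N([\mathcal N(p)_\lambda q]+[p_\lambda\mathcal N(q)]-\mathcal N([p_\lambda q]))$; a Nijenhuis Lie conformal algebra is a Lie conformal algebra with a Nijenhuis operator; morphisms are bracket-preserving $\mathbb C[\partial]$-linear maps intertwining the operators; $\mathrm{Aut}$ denotes bijective self-morphisms. A non-abelian extension: a Nijenhuis Lie conformal algebra $\mathcal E_{\mathcal R}=(\mathcal E,[\cdot_\lambda\cdot]_{\mathcal E},\mathcal R)$ with a short exact sequence of morphisms as displayed, split as $\mathbb C[\partial]$-modules; $\mathcal H\subset\mathcal E$, $\mathcal R|_{\mathcal H}=\mathcal Q$. A section is a $\mathbb C[\partial]$-linear $s$ with $proj\circ s=\mathrm{id}$; it induces $\chi_\lambda(p,q)=[s(p)_\lambda s(q)]_{\mathcal E}-s([p_\lambda q]_{\mathcal L})$, $\rho(p)_\lambda h=[s(p)_\lambda h]_{\mathcal E}$, $\Phi(p)=\mathcal R(s(p))-s(\mathcal N(p))$.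 A non-abelian $2$-cocycle is a triple $(\chi_\lambda:\mathcal L\otimes\mathcal L\to\mathcal H[\lambda],\ \rho:\mathcal L\otimes\mathcal H\to\mathcal H[\lambda],\ \Phi:\mathcal L\to\mathcal H)$ satisfying, for $p,q,r\in\mathcal L$, $h\in\mathcal H$: (i) $\rho(p)_\lambda\rho(q)_\mu h-\rho(q)_\mu\rho(p)_\lambda h-\rho([p_\lambda q]_{\mathcal L})_{\lambda+\mu}h=[\chi_\lambda(p,q)_{\lambda+\mu}h]_{\mathcal H}$; (ii) $\rho(p)_\lambda\chi_\mu(q,r)+\rho(q)_\mu\chi_\lambda(r,p)+\rho(r)_{-\partial-\lambda-\mu}\chi_\lambda(p,q)-\chi_{\lambda+\mu}([q_\mu r]_{\mathcal L},p)-\chi_{\lambda+\mu}([r_{-\partial-\lambda}p]_{\mathcal L},q)-\chi_{\lambda+\mu}([p_\lambda q]_{\mathcal L},r)=0$; (iii) $\rho(\mathcal Np)_\lambda\mathcal Q(h)=\mathcal Q(\rho(\mathcal Np)_\lambda h+\rho(p)_\lambda\mathcal Q(h)-\mathcal Q(\rho(p)_\lambda h))+\mathcal Q([\Phi(p)_\lambda h]_{\mathcal H})-[\Phi(p)_\lambda\mathcal Q(h)]_{\mathcal H}$; (iv) $\chi_\lambda(\mathcal Np,\mathcal Nq)-\mathcal Q(\chi_\lambda(\mathcal Np,q)+\chi_\lambda(p,\mathcal Nq)-\mathcal Q\chi_\lambda(p,q))-\Phi([\mathcal N(p)_\lambda q]_{\mathcal L}+[p_\lambda\mathcal N(q)]_{\mathcal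 L}-\mathcal N[p_\lambda q]_{\mathcal L})+\rho(\mathcal Np)_\lambda\Phi(q)-\rho(\mathcal Nq)_{-\partial-\lambda}\Phi(p)+\mathcal Q(\rho(q)_{-\partial-\lambda}\Phi(p)-\rho(p)_\lambda\Phi(q)+\Phi([p_\lambda q]_{\mathcal L}))+[\Phi(p)_\lambda\Phi(q)]_{\mathcal H}=0$. Two such triples $(\chi,\rho,\Phi),(\chi',\rho',\Phi')$ are equivalent if there is a linear $\tau:\mathcal L\to\mathcal H$ with $\rho(p)_\lambda h-\rho'(p)_\lambda h=[\tau(p)_\lambda h]_{\mathcal H}$, $\chi_\lambda(p,q)-\chi'_\lambda(p,q)=[\tau(p)_\lambda\tau(q)]_{\mathcal H}-\tau([p_\lambda q]_{\mathcal L})+\rho'(p)_\lambda\tau(q)-\rho'(q)_{-\partial-\lambda}\tau(p)$, $\Phi(p)-\Phi'(p)=\mathcal Q\tau(p)-\tau\mathcal N(p)$; $H^2_{nab}(\mathcal L_{\mathcal N},\mathcal H_{\mathcal Q})$ is the set of equivalence classes. The twisted triple is $\chi^{(\alpha,\beta)}_\lambda(p,q)=\alpha\chi_\lambda(\beta^{-1}p,\beta^{-1}q)$, $\rho^{(\alpha,\beta)}(p)_\lambda h=\alpha(\rho(\beta^{-1}p)_\lambda\alpha^{-1}h)$, $\Phi^{(\alpha,\beta)}(p)=\alpha\Phi(\beta^{-1}p)$. The Wells map $\mathfrak W:\mathrm{Aut}(\mathcal H_{\mathcal Q})\times\mathrm{Aut}(\mathcal L_{\mathcal N})\to H^2_{nab}(\mathcal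 L_{\mathcal N},\mathcal H_{\mathcal Q})$ is $\mathfrak W(\alpha,\beta)=[(\chi^{(\alpha,\beta)}_\lambda,\rho^{(\alpha,\beta)},\Phi^{(\alpha,\beta)})-(\chi_\lambda,\rho,\Phi)]$; "$\mathfrak W$ vanishes at $(\alpha,\beta)$" means this class is trivial. Let $\mathrm{Aut}_{\mathcal H}(\mathcal E_{\mathcal R})=\{\gamma\in\mathrm{Aut}(\mathcal E_{\mathcal R}):\gamma(\mathcal H)=\mathcal H\}$ and $\Pi(\gamma)=(\gamma|_{\mathcal H},proj\circ\gamma\circ s)$; $(\alpha,\beta)$ is inducible if it lies in the image of $\Pi$. *)

theory Defs
  imports Complex_Main
begin

text \<open>A Nijenhuis Lie conformal algebra on an additive group type 'a:
  complex scalar multiplication, the operator partial, the lambda-bracket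
  (given by its coefficients: lb a b n is the coefficient of lambda^n in [a_lambda b]),
  and the Nijenhuis operator.\<close>

record 'a ncla =
  sc  :: "complex \<Rightarrow> 'a \<Rightarrow> 'a"
  dd  :: "'a \<Rightarrow> 'a"
  lb  :: "'a \<Rightarrow> 'a \<Rightarrow> nat \<Rightarrow> 'a"
  nop :: "'a \<Rightarrow> 'a"

definition cdmodule :: "'a::ab_group_add ncla \<Rightarrow> bool" where
  "cdmodule A \<longleftrightarrow> module (sc A)
     \<and> (\<forall>x y. dd A (x + y) = dd A x + dd A y)
     \<and> (\<forall>c x. dd A (sc A c x) = sc A c (dd A x))"

definition cdlin :: "'a::ab_group_add ncla \<Rightarrow> 'b::ab_group_add ncla \<Rightarrow> ('a \<Rightarrow> 'b) \<Rightarrow> bool" where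
  "cdlin A B f \<longleftrightarrow> (\<forall>x y. f (x + y) = f x + f y)
     \<and> (\<forall>c x. f (sc A c x) = sc B c (f x))
     \<and> (\<forall>x. f (dd A x) = dd B (f x))"

text \<open>Given a polynomial in mu (coefficient function f, finitely supported), the
  coefficient of lambda^k of the polynomial obtained by substituting mu := -partial-lambda,
  using (-partial-lambda)^m = (-1)^m sum_k (m choose k) lambda^k partial^(m-k).\<close>
definition subst_mdl :: "'a::ab_group_add ncla \<Rightarrow> (nat \<Rightarrow> 'a) \<Rightarrow> nat \<Rightarrow> 'a" where
  "subst_mdl A f k =
     (\<Sum>m\<in>{m. f m \<noteq> 0}. sc A ((-1) ^ m * of_nat (m choose k)) ((dd A ^^ (m - k)) (f m)))"

definition LCA :: "'a::ab_group_add ncla \<Rightarrow> bool" where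
  "LCA A \<longleftrightarrow> cdmodule A
   \<and> (\<forall>a b. finite {n. lb A a b n \<noteq> 0})
   \<and> (\<forall>a b c n. lb A (a + b) c n = lb A a c n + lb A b c n)
   \<and> (\<forall>a b c n. lb A a (b + c) n = lb A a b n + lb A a c n)
   \<and> (\<forall>k a b n. lb A (sc A k a) b n = sc A k (lb A a b n))
   \<and> (\<forall>k a b n. lb A a (sc A k b) n = sc A k (lb A a b n))
   \<comment> \<open>[partial a_lambda b] = -lambda [a_lambda b]\<close>
   \<and> (\<forall>a b n. lb A (dd A a) b n = - (if n = 0 then 0 else lb A a b (n - 1)))
   \<comment> \<open>[a_lambda partial b] = (partial + lambda) [a_lambda b]\<close>
   \<and> (\<forall>a b n. lb A a (dd A b) n = dd A (lb A a b n) + (if n = 0 then 0 else lb A a b (n - 1)))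
   \<comment> \<open>[a_lambda b] = - [b_(-partial-lambda) a]\<close>
   \<and> (\<forall>a b n. lb A a b n = - subst_mdl A (lb A b a) n)
   \<comment> \<open>Jacobi identity, coefficient of lambda^i mu^j\<close>
   \<and> (\<forall>a b c i j. lb A a (lb A b c j) i =
        (\<Sum>l\<le>i. sc A (of_nat ((j + l) choose l)) (lb A (lb A a b (i - l)) c (j + l)))
        + lb A b (lb A a c i) j)"

definition NLCA :: "'a::ab_group_add ncla \<Rightarrow> bool" where
  "NLCA A \<longleftrightarrow> LCA A \<and> cdlin A A (nop A)
   \<and> (\<forall>p q n. lb A (nop A p) (nop A q) n =
        nop A (lb A (nop A p) q n + lb A p (nop A q) n - nop A (lb A p q n)))"

definition morph :: "'a::ab_group_add ncla \<Rightarrow> 'b::ab_group_add ncla \<Rightarrow> ('a \<Rightarrow> 'b) \<Rightarrow> bool" where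
  "morph A B f \<longleftrightarrow> cdlin A B f
   \<and> (\<forall>a b n. lb B (f a) (f b) n = f (lb A a b n))
   \<and> (\<forall>a. f (nop A a) = nop B (f a))"

definition Aut :: "'a::ab_group_add ncla \<Rightarrow> ('a \<Rightarrow> 'a) set" where
  "Aut A = {f. morph A A f \<and> bij f}"

definition nab_ext :: "'h::ab_group_add ncla \<Rightarrow> 'e::ab_group_add ncla \<Rightarrow> 'l::ab_group_add ncla
    \<Rightarrow> ('h \<Rightarrow> 'e) \<Rightarrow> ('e \<Rightarrow> 'l) \<Rightarrow> bool" where
  "nab_ext H E L inc proj \<longleftrightarrow> NLCA H \<and> NLCA E \<and> NLCA L
   \<and> morph H E inc \<and> morph E L proj \<and> inj inc \<and> surj proj
   \<and> range inc = {e. proj e = 0}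
   \<and> (\<exists>s. cdlin L E s \<and> (\<forall>p. proj (s p) = p))"

definition is_section :: "'l::ab_group_add ncla \<Rightarrow> 'e::ab_group_add ncla \<Rightarrow> ('e \<Rightarrow> 'l)
    \<Rightarrow> ('l \<Rightarrow> 'e) \<Rightarrow> bool" where
  "is_section L E proj s \<longleftrightarrow> cdlin L E s \<and> (\<forall>p. proj (s p) = p)"

definition induced_cocycle :: "'l::ab_group_add ncla \<Rightarrow> 'e::ab_group_add ncla \<Rightarrow> ('h::ab_group_add \<Rightarrow> 'e)
    \<Rightarrow> ('l \<Rightarrow> 'e) \<Rightarrow> ('l \<Rightarrow> 'l \<Rightarrow> nat \<Rightarrow> 'h) \<Rightarrow> ('l \<Rightarrow> 'h \<Rightarrow> nat \<Rightarrow> 'h) \<Rightarrow> ('l \<Rightarrow> 'h) \<Rightarrow> bool" where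
  "induced_cocycle L E inc s chi rho Phi \<longleftrightarrow>
     (\<forall>p q n. inc (chi p q n) = lb E (s p) (s q) n - s (lb L p q n))
   \<and> (\<forall>p h n. inc (rho p h n) = lb E (s p) (inc h) n)
   \<and> (\<forall>p. inc (Phi p) = nop E (s p) - s (nop L p))"

definition nab_equiv :: "'l::ab_group_add ncla \<Rightarrow> 'h::ab_group_add ncla
    \<Rightarrow> ('l \<Rightarrow> 'l \<Rightarrow> nat \<Rightarrow> 'h) \<times> ('l \<Rightarrow> 'h \<Rightarrow> nat \<Rightarrow> 'h) \<times> ('l \<Rightarrow> 'h)
    \<Rightarrow> ('l \<Rightarrow> 'l \<Rightarrow> nat \<Rightarrow> 'h) \<times> ('l \<Rightarrow> 'h \<Rightarrow> nat \<Rightarrow> 'h) \<times> ('l \<Rightarrow> 'h) \<Rightarrow> bool" where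
  "nab_equiv L H T T' \<longleftrightarrow> (case T of (chi, rho, Phi) \<Rightarrow> case T' of (chi', rho', Phi') \<Rightarrow>
     \<exists>\<tau>. cdlin L H \<tau>
       \<and> (\<forall>p h n. rho p h n - rho' p h n = lb H (\<tau> p) h n)
       \<and> (\<forall>p q n. chi p q n - chi' p q n =
            lb H (\<tau> p) (\<tau> q) n - \<tau> (lb L p q n) + rho' p (\<tau> q) n
            - subst_mdl H (rho' q (\<tau> p)) n)
       \<and> (\<forall>p. Phi p - Phi' p = nop H (\<tau> p) - \<tau> (nop L p)))"

definition tw_chi :: "('h \<Rightarrow> 'h) \<Rightarrow> ('l \<Rightarrow> 'l) \<Rightarrow> ('l \<Rightarrow> 'l \<Rightarrow> nat \<Rightarrow> 'h) \<Rightarrow> 'l \<Rightarrow> 'l \<Rightarrow> nat \<Rightarrow> 'h" where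
  "tw_chi \<alpha> \<beta> chi = (\<lambda>p q n. \<alpha> (chi (inv \<beta> p) (inv \<beta> q) n))"

definition tw_rho :: "('h \<Rightarrow> 'h) \<Rightarrow> ('l \<Rightarrow> 'l) \<Rightarrow> ('l \<Rightarrow> 'h \<Rightarrow> nat \<Rightarrow> 'h) \<Rightarrow> 'l \<Rightarrow> 'h \<Rightarrow> nat \<Rightarrow> 'h" where
  "tw_rho \<alpha> \<beta> rho = (\<lambda>p h n. \<alpha> (rho (inv \<beta> p) (inv \<alpha> h) n))"

definition tw_Phi :: "('h \<Rightarrow> 'h) \<Rightarrow> ('l \<Rightarrow> 'l) \<Rightarrow> ('l \<Rightarrow> 'h) \<Rightarrow> 'l \<Rightarrow> 'h" where
  "tw_Phi \<alpha> \<beta> Phi = (\<lambda>p. \<alpha> (Phi (inv \<beta> p)))"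

definition inducible :: "'e::ab_group_add ncla \<Rightarrow> ('h \<Rightarrow> 'e) \<Rightarrow> ('e \<Rightarrow> 'l) \<Rightarrow> ('l \<Rightarrow> 'e)
    \<Rightarrow> ('h \<Rightarrow> 'h) \<Rightarrow> ('l \<Rightarrow> 'l) \<Rightarrow> bool" where
  "inducible E inc proj s \<alpha> \<beta> \<longleftrightarrow>
     (\<exists>\<gamma>\<in>Aut E. \<gamma> ` range inc = range inc
        \<and> (\<forall>h. \<gamma> (inc h) = inc (\<alpha> h))
        \<and> (\<forall>p. proj (\<gamma> (s p)) = \<beta> p))"

end

theory Submission
  imports Defs
begin

text \<open>Replacing the section s by s + inc \<circ> \<tau>, for a C[\<partial>]-linear \<tau> : L \<rightarrow> H, changes the
  induced cocycle by exactly the terms in the definition of equivalence, and every section is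
  of this form; so a triple is equivalent to (\<chi>, \<rho>, \<Phi>) iff it is induced by some section.
  An automorphism \<gamma> of E inducing (\<alpha>, \<beta>) turns s into the section \<gamma> \<circ> s \<circ> \<beta>\<inverse>, which
  induces the twisted triple; conversely, a section s' inducing the twisted triple yields the
  automorphism s p + inc h \<mapsto> s' (\<beta> p) + inc (\<alpha> h). Hence both conditions of the theorem
  say that the twisted triple is induced by a section.\<close>

lemma cdlin_add: "cdlin A B f \<Longrightarrow> f (x + y) = f x + f y"
  and cdlin_sc: "cdlin A B f \<Longrightarrow> f (sc A c x) = sc B c (f x)"
  and cdlin_dd: "cdlin A B f \<Longrightarrow> f (dd A x) = dd B (f x)"
  by (simp_all add: cdlin_def)

lemma cdlin_additive: "cdlin A B f \<Longrightarrow> additive f"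
  by (simp add: cdlin_def additive_def)

lemma cdlin_zero: "cdlin A B f \<Longrightarrow> f 0 = 0"
  and cdlin_minus: "cdlin A B f \<Longrightarrow> f (- x) = - f x"
  and cdlin_diff: "cdlin A B f \<Longrightarrow> f (x - y) = f x - f y"
  by (simp_all add: additive.zero additive.minus additive.diff cdlin_additive)

lemma cdlin_funpow_dd: "cdlin A B f \<Longrightarrow> f ((dd A ^^ k) x) = (dd B ^^ k) (f x)"
  by (induction k) (simp_all add: cdlin_dd)

lemma cdlin_id: "cdmodule A \<Longrightarrow> cdlin A A id"
  by (simp add: cdlin_def)

lemma cdlin_comp: "cdlin A B f \<Longrightarrow> cdlin B C g \<Longrightarrow> cdlin A C (g \<circ> f)"
  by (simp add: cdlin_def)

lemma cdlin_plus:
  "cdmodule B \<Longrightarrow> cdlin A B f \<Longrightarrow> cdlin A B g \<Longrightarrow> cdlin A B (\<lambda>x. f x + g x)"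
  by (simp add: cdlin_def cdmodule_def module.scale_right_distrib algebra_simps)

lemma cdlin_minus_fun:
  "cdmodule B \<Longrightarrow> cdlin A B f \<Longrightarrow> cdlin A B g \<Longrightarrow> cdlin A B (\<lambda>x. f x - g x)"
  by (simp add: cdlin_def cdmodule_def module.scale_right_diff_distrib additive.diff
      additive_def algebra_simps)

lemma cdlin_inv: "cdlin A B f \<Longrightarrow> bij f \<Longrightarrow> cdlin B A (inv f)"
  unfolding cdlin_def by (metis bij_inv_eq_iff)

lemma cdlin_cancel_inj:
  assumes g: "cdlin B C g" "inj g" and gf: "cdlin A C (g \<circ> f)"
  shows "cdlin A B f"
  unfolding cdlin_def
proof (intro conjI allI)
  fix x y c
  show "f (x + y) = f x + f y"
    using gf g by (simp add: cdlin_def inj_eq flip: cdlin_add[OF g(1)])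
  show "f (sc A c x) = sc B c (f x)"
    using gf g by (simp add: cdlin_def inj_eq flip: cdlin_sc[OF g(1)])
  show "f (dd A x) = dd B (f x)"
    using gf g by (simp add: cdlin_def inj_eq flip: cdlin_dd[OF g(1)])
qed

lemma cdmodule_sc_zero: "cdmodule A \<Longrightarrow> sc A c 0 = 0"
  by (simp add: cdmodule_def module.scale_zero_right)

lemma cdmodule_funpow_dd_zero: "cdmodule A \<Longrightarrow> (dd A ^^ k) 0 = 0"
proof (induction k)
  case (Suc k)
  then have "additive (dd A)" by (simp add: cdmodule_def additive_def)
  with Suc show ?case by (simp add: additive.zero)
qed simp

lemma subst_mdl_map:
  assumes f: "cdlin A B f" and B: "cdmodule B" and fin: "finite {m. g m \<noteq> 0}"
  shows "subst_mdl B (\<lambda>m. f (g m)) n = f (subst_mdl A g n)"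
proof -
  let ?t = "\<lambda>m. sc B ((-1) ^ m * of_nat (m choose n)) ((dd B ^^ (m - n)) (f (g m)))"
  have "subst_mdl B (\<lambda>m. f (g m)) n = sum ?t {m. g m \<noteq> 0}"
    unfolding subst_mdl_def
    by (rule sum.mono_neutral_left)
       (use fin cdlin_zero[OF f] in \<open>auto simp: cdmodule_funpow_dd_zero[OF B] cdmodule_sc_zero[OF B]\<close>)
  also have "\<dots> = f (subst_mdl A g n)"
    unfolding subst_mdl_def
    by (simp add: additive.sum[OF cdlin_additive[OF f]] cdlin_sc[OF f] cdlin_funpow_dd[OF f])
  finally show ?thesis .
qed

lemma LCA_cdmodule: "LCA A \<Longrightarrow> cdmodule A"
  and lb_add_left: "LCA A \<Longrightarrow> lb A (a + b) c n = lb A a c n + lb A b c n"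
  and lb_add_right: "LCA A \<Longrightarrow> lb A a (b + c) n = lb A a b n + lb A a c n"
  and lb_finite_support: "LCA A \<Longrightarrow> finite {n. lb A a b n \<noteq> 0}"
  and lb_skew: "LCA A \<Longrightarrow> lb A a b n = - subst_mdl A (lb A b a) n"
  unfolding LCA_def by (elim conjE; fast)+

lemma lb_preserved_swap:
  assumes A: "LCA A" and B: "LCA B" and f: "cdlin A B f"
    and ab: "\<And>n. lb B (f a) (f b) n = f (lb A a b n)"
  shows "lb B (f b) (f a) n = f (lb A b a n)"
proof -
  have "lb B (f a) (f b) = (\<lambda>m. f (lb A a b m))"
    using ab by (rule ext)
  then have "lb B (f b) (f a) n = - subst_mdl B (\<lambda>m. f (lb A a b m)) n"
    by (metis lb_skew[OF B])
  also have "\<dots> = f (lb A b a n)"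
    by (simp add: subst_mdl_map[OF f LCA_cdmodule[OF B] lb_finite_support[OF A]]
        lb_skew[OF A, of b a] cdlin_minus[OF f])
  finally show ?thesis .
qed

lemma morph_inv:
  assumes f: "morph A B f" and bij: "bij f"
  shows "morph B A (inv f)"
proof -
  have lb: "lb B (f a) (f b) n = f (lb A a b n)" and nop: "f (nop A a) = nop B (f a)" for a b n
    using f by (simp_all add: morph_def)
  have "cdlin B A (inv f)"
    using f bij by (simp add: morph_def cdlin_inv)
  moreover have "lb A (inv f a) (inv f b) n = inv f (lb B a b n)" for a b n
    using lb[of "inv f a" "inv f b" n] bij by (metis bij_inv_eq_iff bij_is_surj surj_f_inv_f)
  moreover have "inv f (nop B a) = nop A (inv f a)" for a
    using nop[of "inv f a"] bij by (metis bij_inv_eq_iff bij_is_surj surj_f_inv_f)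
  ultimately show ?thesis
    by (simp add: morph_def)
qed

lemma induced_cocycle_unique:
  assumes "inj inc" "induced_cocycle L E inc s chi rho Phi" "induced_cocycle L E inc s chi' rho' Phi'"
  shows "chi' = chi" "rho' = rho" "Phi' = Phi"
proof -
  have "inc (chi' p q n) = inc (chi p q n)" "inc (rho' p h n) = inc (rho p h n)"
    "inc (Phi' p) = inc (Phi p)" for p q h n
    using assms(2,3) by (simp_all add: induced_cocycle_def)
  then show "chi' = chi" "rho' = rho" "Phi' = Phi"
    using assms(1) by (simp_all add: fun_eq_iff inj_eq)
qed

locale nab_extension =
  fixes HQ :: "'h::ab_group_add ncla" and ER :: "'e::ab_group_add ncla"
    and LN :: "'l::ab_group_add ncla"
    and inc :: "'h \<Rightarrow> 'e" and proj :: "'e \<Rightarrow> 'l" and s :: "'l \<Rightarrow> 'e"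
    and chi :: "'l \<Rightarrow> 'l \<Rightarrow> nat \<Rightarrow> 'h" and rho :: "'l \<Rightarrow> 'h \<Rightarrow> nat \<Rightarrow> 'h"
    and Phi :: "'l \<Rightarrow> 'h"
  assumes extension: "nab_ext HQ ER LN inc proj"
    and section_s: "is_section LN ER proj s"
    and cocycle_s: "induced_cocycle LN ER inc s chi rho Phi"
begin

lemma NLCA_E: "NLCA ER"
  and morph_inc: "morph HQ ER inc" and morph_proj: "morph ER LN proj"
  and inj_inc: "inj inc" and range_inc: "range inc = {e. proj e = 0}"
  using extension by (simp_all add: nab_ext_def)

lemma LCA_E: "LCA ER"
  using NLCA_E by (simp add: NLCA_def)

lemma cdmodule_E: "cdmodule ER"
  using LCA_E by (rule LCA_cdmodule)

lemma cdlin_inc: "cdlin HQ ER inc" and cdlin_proj: "cdlin ER LN proj"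
  and cdlin_s: "cdlin LN ER s"
  using morph_inc morph_proj section_s by (simp_all add: morph_def is_section_def)

lemma inc_lb: "lb ER (inc h) (inc k) n = inc (lb HQ h k n)"
  and inc_nop: "nop ER (inc h) = inc (nop HQ h)"
  using morph_inc by (simp_all add: morph_def)

lemma proj_s [simp]: "proj (s p) = p"
  using section_s by (simp add: is_section_def)

lemma proj_inc [simp]: "proj (inc h) = 0"
  using range_inc by auto

lemma inc_eq_iff [simp]: "inc h = inc k \<longleftrightarrow> h = k"
  using inj_inc by (rule inj_eq)

lemma proj_eq_0_imp_inc: "proj e = 0 \<Longrightarrow> \<exists>h. e = inc h"
  using range_inc by blast

lemma section_decomposition:
  assumes "is_section LN ER proj s'"
  obtains h where "e = s' (proj e) + inc h"
proof -
  have "proj (e - s' (proj e)) = 0"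
    using assms by (simp add: is_section_def cdlin_diff[OF cdlin_proj])
  then obtain h where "e - s' (proj e) = inc h"
    using proj_eq_0_imp_inc by blast
  then show thesis
    using that by (metis add.commute diff_eq_eq)
qed

lemma inc_chi: "inc (chi p q n) = lb ER (s p) (s q) n - s (lb LN p q n)"
  and inc_rho: "inc (rho p h n) = lb ER (s p) (inc h) n"
  and inc_Phi: "inc (Phi p) = nop ER (s p) - s (nop LN p)"
  using cocycle_s by (simp_all add: induced_cocycle_def)

lemma finite_support_rho: "finite {m. rho p h m \<noteq> 0}"
proof -
  have "{m. rho p h m \<noteq> 0} = {m. lb ER (s p) (inc h) m \<noteq> 0}"
    by (metis inc_rho inc_eq_iff cdlin_zero[OF cdlin_inc])
  then show ?thesis
    by (simp add: lb_finite_support[OF LCA_E])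
qed

lemma lb_inc_s: "lb ER (inc h) (s q) n = - inc (subst_mdl HQ (rho q h) n)"
proof -
  have "lb ER (s q) (inc h) = (\<lambda>m. inc (rho q h m))"
    by (simp add: inc_rho)
  then have "lb ER (inc h) (s q) n = - subst_mdl ER (\<lambda>m. inc (rho q h m)) n"
    by (metis lb_skew[OF LCA_E])
  also have "\<dots> = - inc (subst_mdl HQ (rho q h) n)"
    by (simp add: subst_mdl_map[OF cdlin_inc cdmodule_E finite_support_rho])
  finally show ?thesis .
qed

lemma lb_s_s: "lb ER (s p) (s q) n = s (lb LN p q n) + inc (chi p q n)"
  by (simp add: inc_chi)

lemma nop_s: "nop ER (s p) = s (nop LN p) + inc (Phi p)"
  by (simp add: inc_Phi)

lemma cdlin_nop_E: "cdlin ER ER (nop ER)"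
  using NLCA_E by (simp add: NLCA_def)

lemma lb_section_plus_inc:
  "lb ER (s p + inc h) (s q + inc k) n = s (lb LN p q n)
     + inc (chi p q n + rho p k n - subst_mdl HQ (rho q h) n + lb HQ h k n)"
  by (simp add: lb_add_left[OF LCA_E] lb_add_right[OF LCA_E] lb_s_s inc_rho lb_inc_s inc_lb
      cdlin_add[OF cdlin_inc] cdlin_diff[OF cdlin_inc])

lemma nop_section_plus_inc:
  "nop ER (s p + inc h) = s (nop LN p) + inc (Phi p + nop HQ h)"
  by (simp add: cdlin_add[OF cdlin_nop_E] nop_s inc_nop cdlin_add[OF cdlin_inc])

lemma is_section_shifted:
  assumes \<tau>: "cdlin LN HQ \<tau>"
  shows "is_section LN ER proj (\<lambda>p. s p + inc (\<tau> p))"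
proof -
  have "cdlin LN ER (\<lambda>p. s p + inc (\<tau> p))"
    using cdlin_plus[OF cdmodule_E cdlin_s cdlin_comp[OF \<tau> cdlin_inc]]
    by (simp add: comp_def)
  then show ?thesis
    by (simp add: is_section_def cdlin_add[OF cdlin_proj])
qed

lemma induced_cocycle_shifted:
  "induced_cocycle LN ER inc (\<lambda>p. s p + inc (\<tau> p))
     (\<lambda>p q n. chi p q n + lb HQ (\<tau> p) (\<tau> q) n - \<tau> (lb LN p q n) + rho p (\<tau> q) n
        - subst_mdl HQ (rho q (\<tau> p)) n)
     (\<lambda>p h n. rho p h n + lb HQ (\<tau> p) h n)
     (\<lambda>p. Phi p + nop HQ (\<tau> p) - \<tau> (nop LN p))"
  unfolding induced_cocycle_def
proof (intro conjI allI)
  fix p q h n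
  show "inc (chi p q n + lb HQ (\<tau> p) (\<tau> q) n - \<tau> (lb LN p q n) + rho p (\<tau> q) n
      - subst_mdl HQ (rho q (\<tau> p)) n)
    = lb ER (s p + inc (\<tau> p)) (s q + inc (\<tau> q)) n - (s (lb LN p q n) + inc (\<tau> (lb LN p q n)))"
    by (simp add: lb_section_plus_inc cdlin_add[OF cdlin_inc] cdlin_diff[OF cdlin_inc] algebra_simps)
  show "inc (rho p h n + lb HQ (\<tau> p) h n) = lb ER (s p + inc (\<tau> p)) (inc h) n"
    by (simp add: lb_add_left[OF LCA_E] inc_rho inc_lb cdlin_add[OF cdlin_inc])
  show "inc (Phi p + nop HQ (\<tau> p) - \<tau> (nop LN p))
    = nop ER (s p + inc (\<tau> p)) - (s (nop LN p) + inc (\<tau> (nop LN p)))"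
    by (simp add: nop_section_plus_inc cdlin_add[OF cdlin_inc] cdlin_diff[OF cdlin_inc])
qed

lemma obtain_section_shift:
  assumes "is_section LN ER proj s'"
  obtains \<tau> where "cdlin LN HQ \<tau>" "s' = (\<lambda>p. s p + inc (\<tau> p))"
proof -
  have s': "cdlin LN ER s'" "\<And>p. proj (s' p) = p"
    using assms by (simp_all add: is_section_def)
  define \<tau> where "\<tau> p = inv inc (s' p - s p)" for p
  have inc_\<tau>: "inc (\<tau> p) = s' p - s p" for p
    unfolding \<tau>_def by (rule f_inv_into_f) (simp add: range_inc s' cdlin_diff[OF cdlin_proj])
  have "cdlin LN ER (inc \<circ> \<tau>)"
    using cdlin_minus_fun[OF cdmodule_E s'(1) cdlin_s] by (simp add: comp_def inc_\<tau>)
  then have "cdlin LN HQ \<tau>"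
    by (rule cdlin_cancel_inj[OF cdlin_inc inj_inc])
  moreover have "s' = (\<lambda>p. s p + inc (\<tau> p))"
    by (simp add: inc_\<tau>)
  ultimately show thesis
    by (rule that)
qed

lemma nab_equiv_iff_induced_by_section:
  "nab_equiv LN HQ (chi', rho', Phi') (chi, rho, Phi) \<longleftrightarrow>
     (\<exists>s'. is_section LN ER proj s' \<and> induced_cocycle LN ER inc s' chi' rho' Phi')"
proof
  assume "nab_equiv LN HQ (chi', rho', Phi') (chi, rho, Phi)"
  then obtain \<tau> where \<tau>: "cdlin LN HQ \<tau>"
    and rho': "\<And>p h n. rho' p h n - rho p h n = lb HQ (\<tau> p) h n"
    and chi': "\<And>p q n. chi' p q n - chi p q n =
            lb HQ (\<tau> p) (\<tau> q) n - \<tau> (lb LN p q n) + rho p (\<tau> q) n - subst_mdl HQ (rho q (\<tau> p)) n"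
    and Phi': "\<And>p. Phi' p - Phi p = nop HQ (\<tau> p) - \<tau> (nop LN p)"
    unfolding nab_equiv_def by blast
  have "chi' = (\<lambda>p q n. chi p q n + lb HQ (\<tau> p) (\<tau> q) n - \<tau> (lb LN p q n) + rho p (\<tau> q) n
      - subst_mdl HQ (rho q (\<tau> p)) n)"
    using chi' by (simp add: fun_eq_iff diff_eq_eq)
  moreover have "rho' = (\<lambda>p h n. rho p h n + lb HQ (\<tau> p) h n)"
    using rho' by (simp add: fun_eq_iff diff_eq_eq add.commute)
  moreover have "Phi' = (\<lambda>p. Phi p + nop HQ (\<tau> p) - \<tau> (nop LN p))"
    using Phi' by (simp add: fun_eq_iff diff_eq_eq)
  ultimately have "induced_cocycle LN ER inc (\<lambda>p. s p + inc (\<tau> p)) chi' rho' Phi'"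
    using induced_cocycle_shifted[of \<tau>] by simp
  with is_section_shifted[OF \<tau>]
  show "\<exists>s'. is_section LN ER proj s' \<and> induced_cocycle LN ER inc s' chi' rho' Phi'"
    by blast
next
  assume "\<exists>s'. is_section LN ER proj s' \<and> induced_cocycle LN ER inc s' chi' rho' Phi'"
  then obtain s' where s': "is_section LN ER proj s'" "induced_cocycle LN ER inc s' chi' rho' Phi'"
    by blast
  obtain \<tau> where \<tau>: "cdlin LN HQ \<tau>" and s'_eq: "s' = (\<lambda>p. s p + inc (\<tau> p))"
    using obtain_section_shift[OF s'(1)] .
  from induced_cocycle_unique[OF inj_inc induced_cocycle_shifted[of \<tau>] s'(2)[unfolded s'_eq]]
  show "nab_equiv LN HQ (chi', rho', Phi') (chi, rho, Phi)"
    unfolding nab_equiv_def using \<tau> by auto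
qed

lemma twisted_cocycle_of_conj_section:
  assumes \<gamma>: "\<gamma> \<in> Aut ER" and \<gamma>_inc: "\<And>h. \<gamma> (inc h) = inc (\<alpha> h)"
    and \<gamma>_s: "\<And>p. proj (\<gamma> (s p)) = \<beta> p"
    and \<alpha>: "bij \<alpha>" and \<beta>: "\<beta> \<in> Aut LN"
  shows "is_section LN ER proj (\<gamma> \<circ> s \<circ> inv \<beta>)"
    and "induced_cocycle LN ER inc (\<gamma> \<circ> s \<circ> inv \<beta>)
           (tw_chi \<alpha> \<beta> chi) (tw_rho \<alpha> \<beta> rho) (tw_Phi \<alpha> \<beta> Phi)"
proof -
  have \<gamma>_lb: "lb ER (\<gamma> a) (\<gamma> b) n = \<gamma> (lb ER a b n)" and \<gamma>_nop: "\<gamma> (nop ER a) = nop ER (\<gamma> a)"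
    and cdlin_\<gamma>: "cdlin ER ER \<gamma>" for a b n
    using \<gamma> by (simp_all add: Aut_def morph_def)
  have "morph LN LN (inv \<beta>)" and bij_\<beta>: "bij \<beta>"
    using \<beta> morph_inv by (auto simp: Aut_def)
  then have cdlin_inv_\<beta>: "cdlin LN LN (inv \<beta>)"
    and inv_\<beta>_lb: "inv \<beta> (lb LN p q n) = lb LN (inv \<beta> p) (inv \<beta> q) n"
    and inv_\<beta>_nop: "inv \<beta> (nop LN p) = nop LN (inv \<beta> p)" for p q n
    by (simp_all add: morph_def)
  show "is_section LN ER proj (\<gamma> \<circ> s \<circ> inv \<beta>)"
    using cdlin_comp[OF cdlin_comp[OF cdlin_inv_\<beta> cdlin_s] cdlin_\<gamma>] bij_\<beta>
    by (simp add: is_section_def comp_assoc \<gamma>_s bij_is_surj surj_f_inv_f)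
  show "induced_cocycle LN ER inc (\<gamma> \<circ> s \<circ> inv \<beta>)
      (tw_chi \<alpha> \<beta> chi) (tw_rho \<alpha> \<beta> rho) (tw_Phi \<alpha> \<beta> Phi)"
    unfolding induced_cocycle_def
  proof (intro conjI allI)
    fix p q h n
    show "inc (tw_chi \<alpha> \<beta> chi p q n) = lb ER ((\<gamma> \<circ> s \<circ> inv \<beta>) p) ((\<gamma> \<circ> s \<circ> inv \<beta>) q) n
        - (\<gamma> \<circ> s \<circ> inv \<beta>) (lb LN p q n)"
      by (simp add: tw_chi_def flip: \<gamma>_inc
          add: inc_chi \<gamma>_lb cdlin_diff[OF cdlin_\<gamma>] inv_\<beta>_lb)
    have "\<gamma> (inc (inv \<alpha> h)) = inc h"
      using \<alpha> by (simp add: \<gamma>_inc bij_is_surj surj_f_inv_f)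
    then show "inc (tw_rho \<alpha> \<beta> rho p h n) = lb ER ((\<gamma> \<circ> s \<circ> inv \<beta>) p) (inc h) n"
      by (metis tw_rho_def \<gamma>_inc inc_rho \<gamma>_lb comp_apply)
    show "inc (tw_Phi \<alpha> \<beta> Phi p) = nop ER ((\<gamma> \<circ> s \<circ> inv \<beta>) p) - (\<gamma> \<circ> s \<circ> inv \<beta>) (nop LN p)"
      by (simp add: tw_Phi_def flip: \<gamma>_inc
          add: inc_Phi \<gamma>_nop cdlin_diff[OF cdlin_\<gamma>] inv_\<beta>_nop)
  qed
qed

definition h_part :: "'e \<Rightarrow> 'h" where
  "h_part e = inv inc (e - s (proj e))"

lemma inc_h_part: "inc (h_part e) = e - s (proj e)"
  unfolding h_part_def by (rule f_inv_into_f) (simp add: range_inc cdlin_diff[OF cdlin_proj])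

lemma section_plus_inc_h_part: "s (proj e) + inc (h_part e) = e"
  by (simp add: inc_h_part)

lemma proj_section_plus_inc [simp]: "proj (s p + inc h) = p"
  by (simp add: cdlin_add[OF cdlin_proj])

lemma h_part_section_plus_inc [simp]: "h_part (s p + inc h) = h"
  by (simp flip: inc_eq_iff add: inc_h_part)

lemma cdlin_h_part: "cdlin ER HQ h_part"
proof (rule cdlin_cancel_inj[OF cdlin_inc inj_inc])
  have "cdlin ER ER (\<lambda>e. id e - (s \<circ> proj) e)"
    by (rule cdlin_minus_fun[OF cdmodule_E cdlin_id[OF cdmodule_E] cdlin_comp[OF cdlin_proj cdlin_s]])
  then show "cdlin ER ER (inc \<circ> h_part)"
    by (simp add: comp_def inc_h_part)
qed

definition lift_aut :: "('h \<Rightarrow> 'h) \<Rightarrow> ('l \<Rightarrow> 'l) \<Rightarrow> ('l \<Rightarrow> 'e) \<Rightarrow> 'e \<Rightarrow> 'e" where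
  "lift_aut \<alpha> \<beta> s' e = s' (\<beta> (proj e)) + inc (\<alpha> (h_part e))"

lemma lift_aut_section_plus_inc: "lift_aut \<alpha> \<beta> s' (s p + inc h) = s' (\<beta> p) + inc (\<alpha> h)"
  by (simp add: lift_aut_def)

lemma cdlin_lift_aut:
  assumes "cdlin HQ HQ \<alpha>" "cdlin LN LN \<beta>" "cdlin LN ER s'"
  shows "cdlin ER ER (lift_aut \<alpha> \<beta> s')"
  using cdlin_plus[OF cdmodule_E
      cdlin_comp[OF cdlin_comp[OF cdlin_proj assms(2)] assms(3)]
      cdlin_comp[OF cdlin_comp[OF cdlin_h_part assms(1)] cdlin_inc]]
  by (simp add: lift_aut_def[abs_def] comp_def)

lemma bij_lift_aut:
  assumes "bij \<alpha>" "bij \<beta>" "is_section LN ER proj s'"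
  shows "bij (lift_aut \<alpha> \<beta> s')"
proof (rule bijI)
  have s': "proj (s' p) = p" for p
    using assms(3) by (simp add: is_section_def)
  have proj_lift: "proj (lift_aut \<alpha> \<beta> s' e) = \<beta> (proj e)" for e
    by (simp add: lift_aut_def cdlin_add[OF cdlin_proj] s')
  show "inj (lift_aut \<alpha> \<beta> s')"
  proof (rule injI)
    fix x y
    assume eq: "lift_aut \<alpha> \<beta> s' x = lift_aut \<alpha> \<beta> s' y"
    then have "proj x = proj y"
      using proj_lift assms(2) by (metis bij_is_inj injD)
    moreover from this eq have "h_part x = h_part y"
      using assms(1) by (simp add: lift_aut_def bij_is_inj inj_eq)
    ultimately show "x = y"
      by (metis section_plus_inc_h_part)
  qed
  show "surj (lift_aut \<alpha> \<beta> s')"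
    unfolding surj_def
  proof
    fix y
    obtain k where y: "y = s' (proj y) + inc k"
      using section_decomposition[OF assms(3)] .
    have "lift_aut \<alpha> \<beta> s' (s (inv \<beta> (proj y)) + inc (inv \<alpha> k)) = y"
      using assms(1,2) y by (simp add: lift_aut_section_plus_inc bij_is_surj surj_f_inv_f)
    then show "\<exists>x. y = lift_aut \<alpha> \<beta> s' x"
      by metis
  qed
qed

context
  fixes \<alpha> :: "'h \<Rightarrow> 'h" and \<beta> :: "'l \<Rightarrow> 'l" and s' :: "'l \<Rightarrow> 'e"
  assumes \<alpha>: "\<alpha> \<in> Aut HQ" and \<beta>: "\<beta> \<in> Aut LN" and s': "is_section LN ER proj s'"
    and cocycle_s': "induced_cocycle LN ER inc s' (tw_chi \<alpha> \<beta> chi) (tw_rho \<alpha> \<beta> rho) (tw_Phi \<alpha> \<beta> Phi)"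
begin

lemma cdlin_\<alpha>: "cdlin HQ HQ \<alpha>" and cdlin_\<beta>: "cdlin LN LN \<beta>" and cdlin_s': "cdlin LN ER s'"
  and \<alpha>_lb: "lb HQ (\<alpha> h) (\<alpha> k) n = \<alpha> (lb HQ h k n)" and \<alpha>_nop: "\<alpha> (nop HQ h) = nop HQ (\<alpha> h)"
  and \<beta>_lb: "lb LN (\<beta> p) (\<beta> q) n = \<beta> (lb LN p q n)" and \<beta>_nop: "\<beta> (nop LN p) = nop LN (\<beta> p)"
  and inv_\<alpha> [simp]: "inv \<alpha> (\<alpha> h) = h" and inv_\<beta> [simp]: "inv \<beta> (\<beta> p) = p"
  using \<alpha> \<beta> s' by (simp_all add: Aut_def morph_def is_section_def bij_is_inj)

lemma lb_s'_\<beta>: "lb ER (s' (\<beta> p)) (s' (\<beta> q)) n = s' (\<beta> (lb LN p q n)) + inc (\<alpha> (chi p q n))"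
proof -
  have "inc (tw_chi \<alpha> \<beta> chi (\<beta> p) (\<beta> q) n)
      = lb ER (s' (\<beta> p)) (s' (\<beta> q)) n - s' (lb LN (\<beta> p) (\<beta> q) n)"
    using cocycle_s' unfolding induced_cocycle_def by blast
  then show ?thesis
    by (simp add: tw_chi_def \<beta>_lb eq_diff_eq add.commute)
qed

lemma lb_s'_\<beta>_inc: "lb ER (s' (\<beta> p)) (inc (\<alpha> k)) n = inc (\<alpha> (rho p k n))"
proof -
  have "inc (tw_rho \<alpha> \<beta> rho (\<beta> p) (\<alpha> k) n) = lb ER (s' (\<beta> p)) (inc (\<alpha> k)) n"
    using cocycle_s' unfolding induced_cocycle_def by blast
  then show ?thesis
    by (simp add: tw_rho_def)
qed

lemma nop_s'_\<beta>: "nop ER (s' (\<beta> p)) = s' (\<beta> (nop LN p)) + inc (\<alpha> (Phi p))"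
proof -
  have "inc (tw_Phi \<alpha> \<beta> Phi (\<beta> p)) = nop ER (s' (\<beta> p)) - s' (nop LN (\<beta> p))"
    using cocycle_s' unfolding induced_cocycle_def by blast
  then show ?thesis
    by (simp add: tw_Phi_def \<beta>_nop eq_diff_eq add.commute)
qed

lemma cdlin_lift: "cdlin ER ER (lift_aut \<alpha> \<beta> s')"
  by (rule cdlin_lift_aut[OF cdlin_\<alpha> cdlin_\<beta> cdlin_s'])

lemma lift_aut_s: "lift_aut \<alpha> \<beta> s' (s p) = s' (\<beta> p)"
  and lift_aut_inc: "lift_aut \<alpha> \<beta> s' (inc h) = inc (\<alpha> h)"
  using lift_aut_section_plus_inc[of \<alpha> \<beta> s' p 0] lift_aut_section_plus_inc[of \<alpha> \<beta> s' 0 h]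
  by (simp_all add: cdlin_zero[OF cdlin_inc] cdlin_zero[OF cdlin_s] cdlin_zero[OF cdlin_\<alpha>]
      cdlin_zero[OF cdlin_\<beta>] cdlin_zero[OF cdlin_s'])

lemma lb_lift_aut:
  "lb ER (lift_aut \<alpha> \<beta> s' a) (lift_aut \<alpha> \<beta> s' b) n = lift_aut \<alpha> \<beta> s' (lb ER a b n)"
proof -
  let ?\<gamma> = "lift_aut \<alpha> \<beta> s'"
  have s_s: "lb ER (?\<gamma> (s p)) (?\<gamma> (s q)) n = ?\<gamma> (lb ER (s p) (s q) n)" for p q n
    by (simp add: lift_aut_s lift_aut_inc lb_s_s lb_s'_\<beta> cdlin_add[OF cdlin_lift])
  have s_inc: "lb ER (?\<gamma> (s p)) (?\<gamma> (inc k)) n = ?\<gamma> (lb ER (s p) (inc k) n)" for p k n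
    by (simp add: lift_aut_s lift_aut_inc lb_s'_\<beta>_inc flip: inc_rho)
  have inc_s: "lb ER (?\<gamma> (inc h)) (?\<gamma> (s q)) n = ?\<gamma> (lb ER (inc h) (s q) n)" for h q n
    by (rule lb_preserved_swap[OF LCA_E LCA_E cdlin_lift s_inc])
  have inc_inc: "lb ER (?\<gamma> (inc h)) (?\<gamma> (inc k)) n = ?\<gamma> (lb ER (inc h) (inc k) n)" for h k n
    by (simp add: lift_aut_inc inc_lb \<alpha>_lb)
  have "lb ER (?\<gamma> (s p + inc h)) (?\<gamma> (s q + inc k)) n = ?\<gamma> (lb ER (s p + inc h) (s q + inc k) n)"
    for p h q k
    by (simp only: cdlin_add[OF cdlin_lift] lb_add_left[OF LCA_E] lb_add_right[OF LCA_E]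
        s_s s_inc inc_s inc_inc)
  then show ?thesis
    by (metis section_plus_inc_h_part)
qed

lemma nop_lift_aut: "lift_aut \<alpha> \<beta> s' (nop ER e) = nop ER (lift_aut \<alpha> \<beta> s' e)"
proof -
  have "lift_aut \<alpha> \<beta> s' (nop ER (s p + inc h)) = nop ER (lift_aut \<alpha> \<beta> s' (s p + inc h))" for p h
    by (simp add: cdlin_add[OF cdlin_nop_E] cdlin_add[OF cdlin_lift] nop_s nop_s'_\<beta> inc_nop
        lift_aut_s lift_aut_inc cdlin_add[OF cdlin_\<alpha>] cdlin_add[OF cdlin_inc] \<alpha>_nop \<beta>_nop add.assoc)
  then show ?thesis
    by (metis section_plus_inc_h_part)
qed

lemma lift_aut_in_Aut: "lift_aut \<alpha> \<beta> s' \<in> Aut ER"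
  using cdlin_lift_aut[OF cdlin_\<alpha> cdlin_\<beta> cdlin_s'] lb_lift_aut nop_lift_aut
    bij_lift_aut[OF _ _ s'] \<alpha> \<beta>
  by (simp add: Aut_def morph_def)

end

lemma inducible_iff_twisted_cocycle_induced:
  assumes \<alpha>: "\<alpha> \<in> Aut HQ" and \<beta>: "\<beta> \<in> Aut LN"
  shows "inducible ER inc proj s \<alpha> \<beta> \<longleftrightarrow>
    (\<exists>s'. is_section LN ER proj s'
       \<and> induced_cocycle LN ER inc s' (tw_chi \<alpha> \<beta> chi) (tw_rho \<alpha> \<beta> rho) (tw_Phi \<alpha> \<beta> Phi))"
proof
  assume "inducible ER inc proj s \<alpha> \<beta>"
  then obtain \<gamma> where \<gamma>: "\<gamma> \<in> Aut ER" "\<And>h. \<gamma> (inc h) = inc (\<alpha> h)" "\<And>p. proj (\<gamma> (s p)) = \<beta> p"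
    unfolding inducible_def by blast
  have "bij \<alpha>"
    using \<alpha> by (simp add: Aut_def)
  with \<gamma> \<beta> show "\<exists>s'. is_section LN ER proj s'
      \<and> induced_cocycle LN ER inc s' (tw_chi \<alpha> \<beta> chi) (tw_rho \<alpha> \<beta> rho) (tw_Phi \<alpha> \<beta> Phi)"
    using twisted_cocycle_of_conj_section by blast
next
  assume "\<exists>s'. is_section LN ER proj s'
      \<and> induced_cocycle LN ER inc s' (tw_chi \<alpha> \<beta> chi) (tw_rho \<alpha> \<beta> rho) (tw_Phi \<alpha> \<beta> Phi)"
  then obtain s' where s': "is_section LN ER proj s'"
    and cocycle_s': "induced_cocycle LN ER inc s' (tw_chi \<alpha> \<beta> chi) (tw_rho \<alpha> \<beta> rho) (tw_Phi \<alpha> \<beta> Phi)"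
    by blast
  let ?\<gamma> = "lift_aut \<alpha> \<beta> s'"
  note lift = lift_aut_s[OF \<alpha> \<beta> s' cocycle_s'] lift_aut_inc[OF \<alpha> \<beta> s' cocycle_s']
  have "range inc \<subseteq> ?\<gamma> ` range inc"
  proof
    fix e
    assume "e \<in> range inc"
    then obtain h where "e = inc h" by blast
    then have "e = ?\<gamma> (inc (inv \<alpha> h))"
      using \<alpha> by (simp add: lift Aut_def bij_is_surj surj_f_inv_f)
    then show "e \<in> ?\<gamma> ` range inc" by blast
  qed
  then have "?\<gamma> ` range inc = range inc"
    by (auto simp: lift)
  moreover have "proj (?\<gamma> (s p)) = \<beta> p" for p
    using s' by (simp add: lift is_section_def)
  ultimately show "inducible ER inc proj s \<alpha> \<beta>"
    unfolding inducible_def using lift_aut_in_Aut[OF \<alpha> \<beta> s' cocycle_s'] lift(2) by blast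
qed

end

theorem theorem6p5:
  fixes HQ :: "'h::ab_group_add ncla" and ER :: "'e::ab_group_add ncla"
    and LN :: "'l::ab_group_add ncla"
    and inc :: "'h \<Rightarrow> 'e" and proj :: "'e \<Rightarrow> 'l" and s :: "'l \<Rightarrow> 'e"
    and chi :: "'l \<Rightarrow> 'l \<Rightarrow> nat \<Rightarrow> 'h" and rho :: "'l \<Rightarrow> 'h \<Rightarrow> nat \<Rightarrow> 'h"
    and Phi :: "'l \<Rightarrow> 'h"
    and \<alpha> :: "'h \<Rightarrow> 'h" and \<beta> :: "'l \<Rightarrow> 'l"
  assumes "nab_ext HQ ER LN inc proj"
    and "is_section LN ER proj s"
    and "induced_cocycle LN ER inc s chi rho Phi"
    and "\<alpha> \<in> Aut HQ" and "\<beta> \<in> Aut LN"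
  shows "inducible ER inc proj s \<alpha> \<beta> \<longleftrightarrow>
         nab_equiv LN HQ (tw_chi \<alpha> \<beta> chi, tw_rho \<alpha> \<beta> rho, tw_Phi \<alpha> \<beta> Phi) (chi, rho, Phi)"
proof -
  interpret nab_extension HQ ER LN inc proj s chi rho Phi
    using assms(1-3) by unfold_locales
  show ?thesis
    by (simp add: inducible_iff_twisted_cocycle_induced[OF assms(4,5)]
        nab_equiv_iff_induced_by_section)
qed

end
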